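(* Let $L\in\{4,5\}$ and let $w:\{0,1\}^L\to\mathbb{R}_{\ge 0}$ be a generic fitness landscape that induces a staircase triangulation of $[0,1]^L$. Then the fitness landscape has at most four peaks.
   Context: Genotypes $g\in\{0,1\}^L$ are identified with vertices of $[0,1]^L$. The triangulation induced by $w$ is the regular subdivision of $[0,1]^L$ obtained by projecting onto $[0,1]^L$ the upper faces of $\mathrm{conv}\{(g,w_g)\}\subset\mathbb{R}^{L+1}$; $w$ is generic if all $w_g$ are distinct and this subdivision is a triangulation. A peak is a genotype all of whose Hamming-distance-$1$ neighbours have strictly lower fitness. The standard staircase triangulation consists of the $L!$ simplices $\{g_0,g_1,\dots,g_L\}$ where $g_0=0\cdots0$, $g_L=1\cdots1$, and each $g_{k+1}$ is obtained from $g_k$ by changing one $0$ to $1$. A staircase triangulation is any image of the standard staircase triangulation under a symmetry of the cube (coordinate permutations and bit flips). *)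

theory Defs
  imports Complex_Main
begin

text \<open>A genotype in {0,1}^L is encoded as the set of coordinates equal to 1,
  a subset of {..<L}. The vertex of [0,1]^L is x_i = 1 iff i is in the set.\<close>

definition genotypes :: "nat \<Rightarrow> nat set set" where
  "genotypes L = {g. g \<subseteq> {..<L}}"

definition coord :: "nat set \<Rightarrow> nat \<Rightarrow> real" where
  "coord g i = (if i \<in> g then 1 else 0)"

definition aff :: "nat \<Rightarrow> (nat \<Rightarrow> real) \<Rightarrow> real \<Rightarrow> nat set \<Rightarrow> real" where
  "aff L a b g = b + (\<Sum>i<L. a i * coord g i)"

definition hamming_neighbour :: "nat set \<Rightarrow> nat set \<Rightarrow> bool" where
  "hamming_neighbour g h \<longleftrightarrow> card ((g - h) \<union> (h - g)) = 1"

text \<open>Cells of the regular subdivision: projections of upper faces of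
  conv{(g,w g)}, i.e. the sets of genotypes on which a non-vertical
  supporting hyperplane from above touches the lifted points.\<close>
definition upper_cell :: "nat \<Rightarrow> (nat set \<Rightarrow> real) \<Rightarrow> nat set set \<Rightarrow> bool" where
  "upper_cell L w S \<longleftrightarrow> (\<exists>a b. (\<forall>g\<in>genotypes L. w g \<le> aff L a b g) \<and>
       S = {g\<in>genotypes L. w g = aff L a b g})"

text \<open>A set of genotypes is full-dimensional iff its affine hull is R^L,
  i.e. no non-constant affine function vanishes on it.\<close>
definition full_dim :: "nat \<Rightarrow> nat set set \<Rightarrow> bool" where
  "full_dim L S \<longleftrightarrow> \<not> (\<exists>a b. (\<exists>i<L. a i \<noteq> 0) \<and> (\<forall>g\<in>S. aff L a b g = 0))"

definition max_cells :: "nat \<Rightarrow> (nat set \<Rightarrow> real) \<Rightarrow> nat set set set" where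
  "max_cells L w = {S. upper_cell L w S \<and> full_dim L S}"

text \<open>Generic: distinct values and the subdivision is a triangulation
  (every maximal cell is an L-simplex, i.e. has exactly L+1 points).\<close>
definition generic :: "nat \<Rightarrow> (nat set \<Rightarrow> real) \<Rightarrow> bool" where
  "generic L w \<longleftrightarrow> inj_on w (genotypes L) \<and> (\<forall>S\<in>max_cells L w. card S = L + 1)"

text \<open>Standard staircase triangulation: chains 0...0 = g_0 < ... < g_L = 1...1,
  each adding one coordinate; p lists the order in which coordinates are set.\<close>
definition staircase_std :: "nat \<Rightarrow> nat set set set" where
  "staircase_std L = {{p ` {..<k} | k. k \<le> L} | p. bij_betw p {..<L} {..<L}}"

definition cube_sym :: "(nat \<Rightarrow> nat) \<Rightarrow> nat set \<Rightarrow> nat set \<Rightarrow> nat set" where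
  "cube_sym \<sigma> F g = ((\<sigma> ` g) - F) \<union> (F - (\<sigma> ` g))"

definition staircase :: "nat \<Rightarrow> nat set set set \<Rightarrow> bool" where
  "staircase L T \<longleftrightarrow> (\<exists>\<sigma> F. bij_betw \<sigma> {..<L} {..<L} \<and> F \<subseteq> {..<L} \<and>
      T = (\<lambda>C. cube_sym \<sigma> F ` C) ` staircase_std L)"

definition peak :: "nat \<Rightarrow> (nat set \<Rightarrow> real) \<Rightarrow> nat set \<Rightarrow> bool" where
  "peak L w g \<longleftrightarrow> g \<in> genotypes L \<and>
     (\<forall>h\<in>genotypes L. hamming_neighbour g h \<longrightarrow> w h < w g)"

end

theory Submission
  imports Defs
begin

(*
  Up to a cube symmetry, which preserves peaks and upper cells, the triangulation is the
  standard staircase. For every square S, S+i, S+j, S+i+j of the cube, the chain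
  S, S+i, S+i+j lies in one staircase simplex while S+j does not, so S+j lies strictly
  below the affine function lifting that simplex; as affine functions are modular on the
  cube, w(S+i) + w(S+j) < w(S) + w(S+i+j). Hence w is strictly supermodular and the gain
  of adding coordinate i grows along inclusion. If X, Y were peaks with X - Y = {i}, then
  adding i to X - {i} would gain while adding i to Y, a superset of X - {i}, would lose.
  Finally, a family of subsets of a 5-set with no |X - Y| = 1 has at most four members:
  one of size at most 1, one of size at least 4, and two of size 2 or 3, because three
  of the latter would need the pairwise disjoint sets X - Y, Y - Z, Z - X of size at
  least 2 each.
*)

lemma card_Diff_cycle_le_card_Un:
  assumes "finite (a \<union> b \<union> c)"
  shows "card (a - b) + card (b - c) + card (c - a) \<le> card (a \<union> b \<union> c)"
proof -
  have fin: "finite (a - b)" "finite (b - c)" "finite (c - a)"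
    using assms by (auto intro: finite_subset)
  have "card (a - b) + card (b - c) = card ((a - b) \<union> (b - c))"
    using fin by (intro card_Un_disjoint[symmetric]) auto
  then have "card (a - b) + card (b - c) + card (c - a) = card ((a - b) \<union> (b - c) \<union> (c - a))"
    using fin by (subst card_Un_disjoint) auto
  also have "\<dots> \<le> card (a \<union> b \<union> c)"
    using assms by (intro card_mono) auto
  finally show ?thesis .
qed

lemma card_le_1_if_pairwise_subset:
  assumes "\<And>g h. g \<in> Q \<Longrightarrow> h \<in> Q \<Longrightarrow> g \<subseteq> h"
  shows "card Q \<le> 1"
  using assms by (metis One_nat_def card.infinite card_le_Suc0_iff_eq subset_antisym zero_le)

lemma card_le_2_if_Diff_card_ge_2:
  assumes "finite I" "card I \<le> 5" "Q \<subseteq> Pow I"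
    and "\<And>g h. g \<in> Q \<Longrightarrow> h \<in> Q \<Longrightarrow> g \<noteq> h \<Longrightarrow> 2 \<le> card (g - h)"
  shows "card Q \<le> 2"
proof (rule ccontr)
  assume "\<not> card Q \<le> 2"
  then obtain T where "T \<subseteq> Q" "card T = 3"
    by (metis not_le_imp_less obtain_subset_with_card_n Suc_leI numeral_2_eq_2 numeral_3_eq_3)
  then obtain a b c where abc: "a \<in> Q" "b \<in> Q" "c \<in> Q" "a \<noteq> b" "b \<noteq> c" "c \<noteq> a"
    by (auto simp: card_3_iff)
  have "a \<union> b \<union> c \<subseteq> I"
    using abc assms(3) by blast
  then have "card (a - b) + card (b - c) + card (c - a) \<le> card I"
    using card_Diff_cycle_le_card_Un card_mono assms(1) finite_subset by (metis le_trans)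
  moreover have "2 \<le> card (a - b)" "2 \<le> card (b - c)" "2 \<le> card (c - a)"
    using abc assms(4) by auto
  ultimately show False
    using assms(2) by linarith
qed

lemma card_le_4_if_no_Diff_card_1:
  assumes I: "finite I" "card I \<le> 5" and Q: "Q \<subseteq> Pow I"
    and no1: "\<And>g h. g \<in> Q \<Longrightarrow> h \<in> Q \<Longrightarrow> card (g - h) \<noteq> 1"
  shows "card Q \<le> 4"
proof -
  have fin: "finite g" if "g \<in> Q" for g
    using that Q I(1) finite_subset by blast
  have subset_if_Diff_card_le_1: "g \<subseteq> h" if "g \<in> Q" "h \<in> Q" "card (g - h) \<le> 1" for g h
    using that no1[of g h] fin[of g] by (simp add: le_Suc_eq)
  define small where "small = {g \<in> Q. card g \<le> 1}"
  define middle where "middle = {g \<in> Q. 2 \<le> card g \<and> card g \<le> 3}"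
  define large where "large = {g \<in> Q. 4 \<le> card g}"
  have "card Q \<le> card small + card middle + card large"
  proof -
    have "Q = small \<union> middle \<union> large"
      unfolding small_def middle_def large_def by auto
    then have "card Q \<le> card (small \<union> middle) + card large"
      by (simp add: card_Un_le)
    then show ?thesis
      using card_Un_le[of small middle] by linarith
  qed
  moreover have "card small \<le> 1"
  proof (rule card_le_1_if_pairwise_subset)
    fix g h assume "g \<in> small" "h \<in> small"
    then show "g \<subseteq> h"
      using subset_if_Diff_card_le_1 fin card_mono[of g "g - h"] unfolding small_def by force
  qed
  moreover have "card large \<le> 1"
  proof (rule card_le_1_if_pairwise_subset)
    fix g h assume g: "g \<in> large" and h: "h \<in> large"
    have "card (g - h) \<le> card (I - h)"
      using g Q I(1) unfolding large_def by (intro card_mono) auto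
    also have "\<dots> = card I - card h"
      using h Q I(1) unfolding large_def by (intro card_Diff_subset) (auto intro: finite_subset)
    finally show "g \<subseteq> h"
      using g h I(2) subset_if_Diff_card_le_1 unfolding large_def by force
  qed
  moreover have "card middle \<le> 2"
  proof (rule card_le_2_if_Diff_card_ge_2[OF I])
    show "middle \<subseteq> Pow I"
      using Q unfolding middle_def by blast
    fix g h assume g: "g \<in> middle" and h: "h \<in> middle" and "g \<noteq> h"
    show "2 \<le> card (g - h)"
    proof (rule ccontr)
      assume "\<not> 2 \<le> card (g - h)"
      then have "g \<subseteq> h"
        using g h subset_if_Diff_card_le_1 unfolding middle_def by force
      then have "card (h - g) \<le> 1"
        using g h fin[of g] unfolding middle_def by (auto simp: card_Diff_subset)
      then have "h \<subseteq> g"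
        using g h subset_if_Diff_card_le_1 unfolding middle_def by force
      with \<open>g \<subseteq> h\<close> \<open>g \<noteq> h\<close> show False
        by blast
    qed
  qed
  ultimately show ?thesis
    by linarith
qed

lemma aff_Un_Int: "aff L a b A + aff L a b B = aff L a b (A \<union> B) + aff L a b (A \<inter> B)"
proof -
  have "coord A k + coord B k = coord (A \<union> B) k + coord (A \<inter> B) k" for k
    by (simp add: coord_def)
  then have "a k * coord A k + a k * coord B k = a k * coord (A \<union> B) k + a k * coord (A \<inter> B) k" for k
    by (metis distrib_left)
  then show ?thesis
    by (simp add: aff_def sum.distrib[symmetric])
qed

lemma upper_cell_Un_Int_less:
  assumes "upper_cell L v C" "A \<in> C" "A \<union> B \<in> C" "A \<inter> B \<in> C" "B \<in> genotypes L" "B \<notin> C"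
  shows "v A + v B < v (A \<union> B) + v (A \<inter> B)"
proof -
  obtain a b where below: "\<forall>g\<in>genotypes L. v g \<le> aff L a b g"
    and cell: "C = {g \<in> genotypes L. v g = aff L a b g}"
    using assms(1) unfolding upper_cell_def by blast
  have "v B < aff L a b B"
    using below cell assms(5,6) by force
  moreover have "v A = aff L a b A" "v (A \<union> B) = aff L a b (A \<union> B)" "v (A \<inter> B) = aff L a b (A \<inter> B)"
    using cell assms(2-4) by auto
  ultimately show ?thesis
    using aff_Un_Int[of L a b A B] by linarith
qed

lemma genotypes_finite: "finite (genotypes L)"
  by (simp add: genotypes_def finite_Collect_subsets)

lemma sym_diff_cube_sym:
  assumes "inj_on \<sigma> {..<L}" "X \<subseteq> {..<L}" "Y \<subseteq> {..<L}"
  shows "(cube_sym \<sigma> F X - cube_sym \<sigma> F Y) \<union> (cube_sym \<sigma> F Y - cube_sym \<sigma> F X)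
    = \<sigma> ` ((X - Y) \<union> (Y - X))"
proof -
  have "\<sigma> ` X - \<sigma> ` Y = \<sigma> ` (X - Y)" "\<sigma> ` Y - \<sigma> ` X = \<sigma> ` (Y - X)"
    using assms by (metis Diff_subset inj_on_image_set_diff order_trans)+
  then show ?thesis
    unfolding cube_sym_def image_Un by blast
qed

lemma bij_betw_cube_sym:
  assumes "bij_betw \<sigma> {..<L} {..<L}" "F \<subseteq> {..<L}"
  shows "bij_betw (cube_sym \<sigma> F) (genotypes L) (genotypes L)"
proof -
  have into: "cube_sym \<sigma> F ` genotypes L \<subseteq> genotypes L"
    using assms unfolding genotypes_def cube_sym_def bij_betw_def by auto
  have "inj_on (cube_sym \<sigma> F) (genotypes L)"
  proof (rule inj_onI)
    fix X Y assume "X \<in> genotypes L" "Y \<in> genotypes L" "cube_sym \<sigma> F X = cube_sym \<sigma> F Y"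
    then have "\<sigma> ` ((X - Y) \<union> (Y - X)) = {}"
      using sym_diff_cube_sym[of \<sigma> L X Y F] assms(1) by (simp add: bij_betw_def genotypes_def)
    then show "X = Y"
      by blast
  qed
  with into show ?thesis
    by (simp add: bij_betw_def endo_inj_surj genotypes_finite)
qed

lemma hamming_neighbour_cube_sym:
  assumes "bij_betw \<sigma> {..<L} {..<L}" "X \<in> genotypes L" "Y \<in> genotypes L"
  shows "hamming_neighbour (cube_sym \<sigma> F X) (cube_sym \<sigma> F Y) \<longleftrightarrow> hamming_neighbour X Y"
proof -
  have "inj_on \<sigma> ((X - Y) \<union> (Y - X))"
    using assms by (auto simp: bij_betw_def genotypes_def intro: inj_on_subset)
  then show ?thesis
    using assms sym_diff_cube_sym[of \<sigma> L X Y F]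
    by (simp add: hamming_neighbour_def bij_betw_def genotypes_def card_image)
qed

lemma card_peaks_cube_sym:
  assumes "bij_betw \<sigma> {..<L} {..<L}" "F \<subseteq> {..<L}"
  shows "card {g. peak L w g} = card {X. peak L (w \<circ> cube_sym \<sigma> F) X}"
proof -
  let ?f = "cube_sym \<sigma> F"
  have bij: "bij_betw ?f (genotypes L) (genotypes L)"
    using bij_betw_cube_sym[OF assms] .
  have peak_iff: "peak L (w \<circ> ?f) X \<longleftrightarrow> peak L w (?f X)" if "X \<in> genotypes L" for X
  proof -
    have "(\<forall>Y\<in>genotypes L. hamming_neighbour X Y \<longrightarrow> w (?f Y) < w (?f X))
      \<longleftrightarrow> (\<forall>h\<in>?f ` genotypes L. hamming_neighbour (?f X) h \<longrightarrow> w h < w (?f X))"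
      using hamming_neighbour_cube_sym[OF assms(1) that] by auto
    then show ?thesis
      using that bij unfolding peak_def bij_betw_def by auto
  qed
  have "bij_betw ?f {X \<in> genotypes L. peak L (w \<circ> ?f) X} {g \<in> genotypes L. peak L w g}"
    by (intro bij_betw_Collect[OF bij]) (simp add: peak_iff)
  moreover have "{X \<in> genotypes L. peak L v X} = {X. peak L v X}" for v
    by (auto simp: peak_def)
  ultimately have "bij_betw ?f {X. peak L (w \<circ> ?f) X} {g. peak L w g}"
    by simp
  then show ?thesis
    by (simp add: bij_betw_same_card)
qed

lemma coord_cube_sym:
  assumes "inj_on \<sigma> {..<L}" "X \<subseteq> {..<L}" "m < L"
  shows "coord (cube_sym \<sigma> F X) (\<sigma> m) = coord F (\<sigma> m) + (1 - 2 * coord F (\<sigma> m)) * coord X m"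
proof -
  have "\<sigma> m \<in> \<sigma> ` X \<longleftrightarrow> m \<in> X"
    using assms by (auto dest: inj_onD)
  then show ?thesis
    unfolding coord_def cube_sym_def by auto
qed

lemma aff_cube_sym:
  assumes "bij_betw \<sigma> {..<L} {..<L}" "X \<in> genotypes L"
  shows "aff L a b (cube_sym \<sigma> F X) = aff L (\<lambda>m. a (\<sigma> m) * (1 - 2 * coord F (\<sigma> m)))
    (b + (\<Sum>m<L. a (\<sigma> m) * coord F (\<sigma> m))) X"
proof -
  have "aff L a b (cube_sym \<sigma> F X) = b + (\<Sum>m<L. a (\<sigma> m) * coord (cube_sym \<sigma> F X) (\<sigma> m))"
    using sum.reindex_bij_betw[OF assms(1), of "\<lambda>k. a k * coord (cube_sym \<sigma> F X) k"]
    by (simp add: aff_def)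
  also have "(\<Sum>m<L. a (\<sigma> m) * coord (cube_sym \<sigma> F X) (\<sigma> m))
    = (\<Sum>m<L. a (\<sigma> m) * coord F (\<sigma> m) + a (\<sigma> m) * (1 - 2 * coord F (\<sigma> m)) * coord X m)"
    using assms by (intro sum.cong) (auto simp: coord_cube_sym bij_betw_def genotypes_def algebra_simps)
  finally show ?thesis
    by (simp add: aff_def sum.distrib)
qed

lemma upper_cell_cube_sym:
  assumes "bij_betw \<sigma> {..<L} {..<L}" "F \<subseteq> {..<L}"
    and "upper_cell L w (cube_sym \<sigma> F ` C)" "C \<subseteq> genotypes L"
  shows "upper_cell L (w \<circ> cube_sym \<sigma> F) C"
proof -
  let ?f = "cube_sym \<sigma> F"
  have bij: "bij_betw ?f (genotypes L) (genotypes L)"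
    using bij_betw_cube_sym[OF assms(1,2)] .
  obtain a b where below: "\<forall>g\<in>genotypes L. w g \<le> aff L a b g"
    and cell: "?f ` C = {g \<in> genotypes L. w g = aff L a b g}"
    using assms(3) unfolding upper_cell_def by blast
  obtain a' b' where aff': "\<And>X. X \<in> genotypes L \<Longrightarrow> aff L a b (?f X) = aff L a' b' X"
    using aff_cube_sym[OF assms(1)] by blast
  have "\<forall>X\<in>genotypes L. w (?f X) \<le> aff L a' b' X"
    using below aff' bij_betw_apply[OF bij] by metis
  moreover have "C = {X \<in> genotypes L. w (?f X) = aff L a' b' X}"
  proof -
    have "X \<in> C \<longleftrightarrow> ?f X \<in> ?f ` C" if "X \<in> genotypes L" for X
      using that assms(4) bij by (auto simp: bij_betw_def dest: inj_onD)
    then show ?thesis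
      using cell assms(4) bij aff' by (auto simp: bij_betw_def)
  qed
  ultimately show ?thesis
    unfolding upper_cell_def by auto
qed

lemma staircase_std_chain:
  assumes "C \<in> staircase_std L" "X \<in> C" "Y \<in> C"
  shows "X \<subseteq> Y \<or> Y \<subseteq> X"
proof -
  obtain p where "C = {p ` {..<k} | k. k \<le> L}"
    using assms(1) unfolding staircase_std_def by blast
  then obtain k l where "X = p ` {..<k}" "Y = p ` {..<l}"
    using assms(2,3) by blast
  then show ?thesis
    by (metis image_mono lessThan_subset_iff nle_le)
qed

lemma staircase_std_subset_genotypes:
  assumes "C \<in> staircase_std L"
  shows "C \<subseteq> genotypes L"
  using assms unfolding staircase_std_def genotypes_def bij_betw_def by auto

lemma prefix_sets_in_staircase_std:
  assumes "distinct xs" "set xs = {..<L}"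
  shows "{set (take k xs) | k. k \<le> L} \<in> staircase_std L"
proof -
  have len: "length xs = L"
    using assms distinct_card by fastforce
  have "(!) xs ` {..<k} = set (take k xs)" if "k \<le> L" for k
    using that len by (auto simp: in_set_conv_nth nth_take) (metis nth_take image_eqI lessThan_iff)
  then have "{set (take k xs) | k. k \<le> L} = {(!) xs ` {..<k} | k. k \<le> L}"
    by auto
  moreover have "bij_betw ((!) xs) {..<L} {..<L}"
    using bij_betw_nth[OF assms(1)] len assms(2) by (simp add: lessThan_atLeast0)
  ultimately show ?thesis
    unfolding staircase_std_def by blast
qed

lemma staircase_std_contains_chain:
  assumes "S \<subseteq> {..<L}" "i < L" "j < L" "i \<noteq> j" "i \<notin> S" "j \<notin> S"
  obtains C where "C \<in> staircase_std L" "S \<in> C" "insert i S \<in> C" "insert j (insert i S) \<in> C"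
proof -
  have finS: "finite S"
    using assms(1) finite_subset by blast
  define xs where
    "xs = sorted_list_of_set S @ [i, j] @ sorted_list_of_set ({..<L} - insert i (insert j S))"
  let ?C = "{set (take k xs) | k. k \<le> L}"
  have "distinct xs" "set xs = {..<L}"
    using assms finS unfolding xs_def by auto
  then have C: "?C \<in> staircase_std L"
    by (rule prefix_sets_in_staircase_std)
  have "card (insert j (insert i S)) \<le> L"
    using assms card_mono[of "{..<L}" "insert j (insert i S)"] by simp
  then have L: "card S + 2 \<le> L"
    using assms finS by simp
  have "set (take (card S) xs) = S" "set (take (card S + 1) xs) = insert i S"
    "set (take (card S + 2) xs) = insert j (insert i S)"
    using finS unfolding xs_def by auto
  moreover have "card S \<le> L" "card S + 1 \<le> L"
    using L by simp_all
  ultimately have "S \<in> ?C" "insert i S \<in> ?C" "insert j (insert i S) \<in> ?C"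
    using L by (metis (mono_tags, lifting) mem_Collect_eq)+
  then show thesis
    using that[OF C] by blast
qed

definition strictly_supermodular_on :: "nat set \<Rightarrow> (nat set \<Rightarrow> real) \<Rightarrow> bool" where
  "strictly_supermodular_on I v \<longleftrightarrow> (\<forall>S\<subseteq>I. \<forall>i\<in>I - S. \<forall>j\<in>I - S. i \<noteq> j \<longrightarrow>
     v (insert i S) + v (insert j S) < v S + v (insert j (insert i S)))"

lemma strictly_supermodular_on_if_staircase_std:
  assumes "\<And>C. C \<in> staircase_std L \<Longrightarrow> upper_cell L v C"
  shows "strictly_supermodular_on {..<L} v"
  unfolding strictly_supermodular_on_def
proof (intro allI impI ballI)
  fix S i j assume S: "S \<subseteq> {..<L}" and i: "i \<in> {..<L} - S" and j: "j \<in> {..<L} - S" and "i \<noteq> j"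
  then obtain C where C: "C \<in> staircase_std L" "S \<in> C" "insert i S \<in> C" "insert j (insert i S) \<in> C"
    using staircase_std_contains_chain[of S L i j] by blast
  have "insert j S \<notin> C"
    using staircase_std_chain[OF C(1) C(3)] i j \<open>i \<noteq> j\<close> by blast
  moreover have "insert j S \<in> genotypes L"
    using S j by (simp add: genotypes_def)
  moreover have "insert i S \<union> insert j S = insert j (insert i S)" "insert i S \<inter> insert j S = S"
    using i j \<open>i \<noteq> j\<close> by auto
  ultimately show "v (insert i S) + v (insert j S) < v S + v (insert j (insert i S))"
    using upper_cell_Un_Int_less[of L v C "insert i S" "insert j S"] assms C by auto
qed

lemma strictly_supermodular_on_marginal_mono:
  assumes "strictly_supermodular_on I v" "A \<subseteq> B" "B \<subseteq> I" "finite B" "i \<in> I - B"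
  shows "v (insert i A) - v A \<le> v (insert i B) - v B"
proof -
  have "v (insert i A) - v A \<le> v (insert i (A \<union> D)) - v (A \<union> D)"
    if "finite D" "A \<union> D \<subseteq> I" "i \<in> I - (A \<union> D)" for D
    using that
  proof (induction D rule: finite_induct)
    case empty
    then show ?case by simp
  next
    case (insert x D)
    show ?case
    proof (cases "x \<in> A \<union> D")
      case True
      then show ?thesis
        using insert by (simp add: insert_absorb)
    next
      case False
      let ?S = "A \<union> D"
      have "v (insert i ?S) + v (insert x ?S) < v ?S + v (insert x (insert i ?S))"
        using assms(1) insert.prems False unfolding strictly_supermodular_on_def by auto
      moreover have "A \<union> insert x D = insert x ?S" "insert x (insert i ?S) = insert i (insert x ?S)"
        by auto
      ultimately show ?thesis
        using insert by auto
    qed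
  qed
  from this[of "B - A"] show ?thesis
    using assms by (simp add: Un_absorb1)
qed

lemma peak_Diff_card_neq_1:
  assumes "strictly_supermodular_on {..<L} v" "peak L v X" "peak L v Y"
  shows "card (X - Y) \<noteq> 1"
proof
  assume "card (X - Y) = 1"
  then obtain i where i: "X - Y = {i}"
    by (meson card_1_singletonE)
  have G: "X \<subseteq> {..<L}" "Y \<subseteq> {..<L}"
    using assms(2,3) by (auto simp: peak_def genotypes_def)
  have "(X - (X - {i})) \<union> ((X - {i}) - X) = {i}" "(Y - insert i Y) \<union> (insert i Y - Y) = {i}"
    using i by auto
  then have "hamming_neighbour X (X - {i})" "hamming_neighbour Y (insert i Y)"
    by (simp_all add: hamming_neighbour_def)
  moreover have "X - {i} \<in> genotypes L" "insert i Y \<in> genotypes L"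
    using G i by (auto simp: genotypes_def)
  ultimately have "v (X - {i}) < v X" "v (insert i Y) < v Y"
    using assms(2,3) unfolding peak_def by blast+
  moreover have "v (insert i (X - {i})) - v (X - {i}) \<le> v (insert i Y) - v Y"
    using strictly_supermodular_on_marginal_mono[OF assms(1), of "X - {i}" Y i] G i
    by (auto intro: finite_subset)
  moreover have "insert i (X - {i}) = X"
    using i by auto
  ultimately show False
    by simp
qed

theorem theorem2:
  fixes L :: nat and w :: "nat set \<Rightarrow> real"
  assumes "L \<in> {4, 5}"
    and "\<forall>g\<in>genotypes L. w g \<ge> 0"
    and "generic L w"
    and "staircase L (max_cells L w)"
  shows "card {g. peak L w g} \<le> 4"
proof -
  obtain \<sigma> F where \<sigma>: "bij_betw \<sigma> {..<L} {..<L}" and F: "F \<subseteq> {..<L}"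
    and cells: "max_cells L w = (\<lambda>C. cube_sym \<sigma> F ` C) ` staircase_std L"
    using assms(4) unfolding staircase_def by blast
  define v where "v = w \<circ> cube_sym \<sigma> F"
  have "upper_cell L v C" if "C \<in> staircase_std L" for C
  proof -
    have "upper_cell L w (cube_sym \<sigma> F ` C)"
      using cells that by (auto simp: max_cells_def)
    then show ?thesis
      unfolding v_def by (rule upper_cell_cube_sym[OF \<sigma> F _ staircase_std_subset_genotypes[OF that]])
  qed
  then have supermodular: "strictly_supermodular_on {..<L} v"
    by (rule strictly_supermodular_on_if_staircase_std)
  have "card {g. peak L w g} = card {X. peak L v X}"
    using card_peaks_cube_sym[OF \<sigma> F] unfolding v_def .
  also have "\<dots> \<le> 4"
  proof (rule card_le_4_if_no_Diff_card_1)
    show "card {..<L} \<le> 5"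
      using assms(1) by fastforce
    show "{X. peak L v X} \<subseteq> Pow {..<L}"
      by (auto simp: peak_def genotypes_def)
    show "card (X - Y) \<noteq> 1" if "X \<in> {X. peak L v X}" "Y \<in> {X. peak L v X}" for X Y
      using peak_Diff_card_neq_1[OF supermodular] that by blast
  qed simp
  finally show ?thesis .
qed

end
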